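(* Let $\lambda\in(0,1/e)$, $\gamma>0$, $A\subset\mathbb{C}$, and let $f$ be a bilipschitz mapping, i.e. there exist $0<c<C<\infty$ with $c\leq|f(x)-f(y)|/|x-y|\leq C$ for all $x\neq y$. If $\mathcal{H}^{h_{\lambda,\gamma}}(A)=0$, then $\mathcal{H}^{h_{\lambda,\gamma}}(f(A))=0$; if $\mathcal{H}^{h_{\lambda,\gamma}}(A)=\infty$, then $\mathcal{H}^{h_{\lambda,\gamma}}(f(A))=\infty$.
   Context: For $\lambda\in(0,1/e)$ let $E_\lambda(z)=\lambda e^z$; it has a unique real repelling fixed point $\beta_\lambda$. Let $L_\lambda$ be the entire function with $L_\lambda(0)=\beta_\lambda$, $L_\lambda'(0)=1$ and $E_\lambda(L_\lambda(z))=L_\lambda(\beta_\lambda z)$ for all $z$, and let $\Phi_\lambda=(L_\lambda|_{\mathbb{R}})^{-1}$ (an increasing function tending to $\infty$). The gauge function is $h_{\lambda,\gamma}(t)=t^2\Phi_\lambda(1/t)^\gamma$ for small $t>0$ and $h_{\lambda,\gamma}(0)=0$. For a gauge function $h$ and $A\subset\mathbb{C}$, $\mathcal{H}^h(A)=\lim_{\delta\to0}\inf\{\sum_i h(\operatorname{diam}A_i): A\subset\bigcup_i A_i,\ \operatorname{diam}A_i<\delta\}$. *)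

theory Defs
  imports "HOL-Analysis.Analysis" "HOL-Complex_Analysis.Complex_Analysis"
begin

definition E_map :: "real \<Rightarrow> complex \<Rightarrow> complex" where
  "E_map lam z = complex_of_real lam * exp z"

text \<open>The unique real repelling fixed point of E_lambda (repelling: |E_lambda'(x)| > 1).\<close>
definition beta_fp :: "real \<Rightarrow> real" where
  "beta_fp lam = (THE x::real. lam * exp x = x \<and> \<bar>lam * exp x\<bar> > 1)"

definition L_lin :: "real \<Rightarrow> complex \<Rightarrow> complex" where
  "L_lin lam = (THE L. L holomorphic_on UNIV \<and> L 0 = complex_of_real (beta_fp lam)
      \<and> deriv L 0 = 1
      \<and> (\<forall>z. E_map lam (L z) = L (complex_of_real (beta_fp lam) * z)))"

definition Phi_inv :: "real \<Rightarrow> real \<Rightarrow> real" where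
  "Phi_inv lam t = (THE s::real. L_lin lam (complex_of_real s) = complex_of_real t)"

definition gauge_h :: "real \<Rightarrow> real \<Rightarrow> real \<Rightarrow> real" where
  "gauge_h lam gam t = (if t \<le> 0 then 0 else t\<^sup>2 * (Phi_inv lam (1 / t)) powr gam)"

text \<open>Generalized Hausdorff measure with gauge h on subsets of the plane:
  limit as delta -> 0 (a monotone limit, i.e. the supremum over delta > 0) of the infimum
  over countable covers by (bounded) sets of diameter < delta.\<close>
definition hausdorff_gauge :: "(real \<Rightarrow> real) \<Rightarrow> complex set \<Rightarrow> ennreal" where
  "hausdorff_gauge h A = (SUP \<delta>\<in>{0<..}.
     INF S\<in>{S :: nat \<Rightarrow> complex set. A \<subseteq> (\<Union>i. S i) \<and>
                 (\<forall>i. bounded (S i) \<and> diameter (S i) < \<delta>)}.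
        (\<Sum>i. ennreal (h (diameter (S i)))))"

definition bilipschitz :: "(complex \<Rightarrow> complex) \<Rightarrow> bool" where
  "bilipschitz f \<longleftrightarrow> (\<exists>c C. 0 < c \<and> c < C \<and>
     (\<forall>x y. x \<noteq> y \<longrightarrow> c \<le> cmod (f x - f y) / cmod (x - y) \<and> cmod (f x - f y) / cmod (x - y) \<le> C))"

end

theory Submission
  imports Defs
begin

text \<open>A bilipschitz map f and its inverse on f ` A are K-Lipschitz for some K \<ge> 1. Replacing the
  sets of a fine cover by balls of K times their diameter shows that the h-measure grows at most
  by a factor M under a K-Lipschitz map, provided h (2 K d) \<le> M h d for small d; hence f preserves
  both null sets and sets of infinite measure. For h = h_{\<lambda>,\<gamma>} this holds with M = (2 K)^2
  because \<Phi>_\<lambda> is positive and increasing beyond \<beta>_\<lambda>.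

  That requires identifying the linearizer. The Koenigs approximants E^n (\<beta> + z / \<beta>^n) converge,
  since near \<beta> the rescaled map is a contraction, and their limit solves the defining conditions.
  It is the only solution: the difference D of two solutions satisfies
  D (\<beta> z) = F z (e^{D z} - 1) with F 0 = \<beta>, so a zero of order n \<ge> 2 at 0 would force
  \<beta>^n = \<beta>. On the real line the linearizer is real, its derivative never vanishes (a zero
  would propagate to 0 along x / \<beta>^n), and it is unbounded, so it has an increasing inverse.\<close>

section \<open>Gauge Hausdorff measures under Lipschitz maps\<close>

lemma INF_mult_left_ennreal:
  fixes c :: ennreal
  assumes "c < top" "c \<noteq> 0"
  shows "c * (INF i\<in>I. f i) = (INF i\<in>I. c * f i)"
proof (cases "I = {}")
  case True
  then show ?thesis using assms by (simp add: ennreal_mult_top)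
next
  case False
  have "continuous_on UNIV ((*) c)"
    using ennreal_continuous_on_cmult[OF assms(1) continuous_on_id] by simp
  then have "continuous (at_right (Inf (f ` I))) ((*) c)"
    by (simp add: continuous_on_eq_continuous_within continuous_at_imp_continuous_at_within)
  then have "c * Inf (f ` I) = Inf ((*) c ` f ` I)"
    using False by (intro continuous_at_Inf_mono) (auto simp: mono_def mult_left_mono)
  then show ?thesis by (simp add: image_image)
qed

definition gauge_covers :: "complex set \<Rightarrow> real \<Rightarrow> (nat \<Rightarrow> complex set) set" where
  "gauge_covers A \<delta> = {S. A \<subseteq> (\<Union>i. S i) \<and> (\<forall>i. bounded (S i) \<and> diameter (S i) < \<delta>)}"

lemma hausdorff_gauge_eq_SUP_INF_covers:
  "hausdorff_gauge h A = (SUP \<delta>\<in>{0<..}. INF S\<in>gauge_covers A \<delta>. \<Sum>i. ennreal (h (diameter (S i))))"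
  unfolding hausdorff_gauge_def gauge_covers_def ..

lemma Lipschitz_image_cover:
  fixes g :: "complex \<Rightarrow> complex"
  assumes lip: "\<And>x y. x \<in> A \<Longrightarrow> y \<in> A \<Longrightarrow> norm (g x - g y) \<le> K * norm (x - y)"
    and "K > 0" and S: "S \<in> gauge_covers A \<delta>"
  obtains T where "T \<in> gauge_covers (g ` A) (2 * K * \<delta>)"
    and "\<And>i. T i = {} \<or> diameter (T i) = 2 * K * diameter (S i)"
proof
  define T where
    "T i = (if S i \<inter> A = {} then {} else cball (g (SOME p. p \<in> S i \<inter> A)) (K * diameter (S i)))" for i
  have S_bounded: "bounded (S i)" "diameter (S i) < \<delta>" for i
    using S by (auto simp: gauge_covers_def)
  then have S_diam: "0 \<le> diameter (S i)" for i
    using diameter_ge_0 by blast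
  show "T i = {} \<or> diameter (T i) = 2 * K * diameter (S i)" for i
    using S_diam[of i] \<open>K > 0\<close> by (simp add: T_def)
  have "g x \<in> T i" if "x \<in> A" "x \<in> S i" for x i
  proof -
    define p where "p = (SOME p. p \<in> S i \<inter> A)"
    have p: "p \<in> S i \<inter> A"
      unfolding p_def using that by (metis IntI someI_ex)
    have "norm (g x - g p) \<le> K * norm (x - p)"
      using lip that p by auto
    also have "\<dots> \<le> K * diameter (S i)"
      using diameter_bounded_bound[OF S_bounded(1) that(2), of p] p \<open>K > 0\<close> by (simp add: dist_norm)
    finally have "g x \<in> cball (g p) (K * diameter (S i))"
      by (simp add: dist_norm norm_minus_commute)
    moreover have "T i = cball (g p) (K * diameter (S i))"
      using that by (auto simp: T_def p_def)
    ultimately show ?thesis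
      by simp
  qed
  then have "g ` A \<subseteq> (\<Union>i. T i)"
    using S by (fastforce simp: gauge_covers_def)
  moreover have "bounded (T i)" "diameter (T i) < 2 * K * \<delta>" for i
    using S_diam[of i] S_bounded(2)[of i] \<open>K > 0\<close> by (auto simp: T_def)
  ultimately show "T \<in> gauge_covers (g ` A) (2 * K * \<delta>)"
    by (simp add: gauge_covers_def)
qed

lemma hausdorff_gauge_Lipschitz_image_le:
  fixes g :: "complex \<Rightarrow> complex" and h :: "real \<Rightarrow> real"
  assumes lip: "\<And>x y. x \<in> A \<Longrightarrow> y \<in> A \<Longrightarrow> norm (g x - g y) \<le> K * norm (x - y)"
    and "K > 0" "M > 0" "d0 > 0" and h_0: "h 0 = 0" and h_nonneg: "\<And>t. h t \<ge> 0"
    and h_growth: "\<And>d. 0 < d \<Longrightarrow> d < d0 \<Longrightarrow> h (2 * K * d) \<le> M * h d"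
  shows "hausdorff_gauge h (g ` A) \<le> ennreal M * hausdorff_gauge h A"
  unfolding hausdorff_gauge_eq_SUP_INF_covers
proof (rule SUP_least)
  let ?sum = "\<lambda>S. \<Sum>i. ennreal (h (diameter (S i)))"
  fix \<delta> :: real assume "\<delta> \<in> {0<..}"
  define \<delta>' where "\<delta>' = min d0 (\<delta> / (2 * K))"
  have "\<delta>' > 0"
    using \<open>\<delta> \<in> {0<..}\<close> assms by (simp add: \<delta>'_def)
  have image_cover: "(INF T\<in>gauge_covers (g ` A) \<delta>. ?sum T) \<le> ennreal M * ?sum S"
    if S: "S \<in> gauge_covers A \<delta>'" for S
  proof -
    obtain T where T: "T \<in> gauge_covers (g ` A) (2 * K * \<delta>')"
      and T_diam: "\<And>i. T i = {} \<or> diameter (T i) = 2 * K * diameter (S i)"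
      using Lipschitz_image_cover[OF lip \<open>K > 0\<close> S] by blast
    have "\<delta>' \<le> \<delta> / (2 * K)"
      by (simp add: \<delta>'_def)
    then have "2 * K * \<delta>' \<le> \<delta>"
      using \<open>K > 0\<close> by (simp add: field_simps)
    then have "T \<in> gauge_covers (g ` A) \<delta>"
      using T by (auto simp: gauge_covers_def intro: less_le_trans)
    moreover have "h (diameter (T i)) \<le> M * h (diameter (S i))" for i
    proof -
      have "0 \<le> diameter (S i)" "diameter (S i) < d0"
        using S diameter_ge_0 by (auto simp: gauge_covers_def \<delta>'_def)
      then show ?thesis
        using T_diam[of i] h_growth[of "diameter (S i)"] h_0 h_nonneg[of "diameter (S i)"] \<open>M > 0\<close>
        by (cases "diameter (S i) = 0") auto
    qed
    then have "?sum T \<le> (\<Sum>i. ennreal M * ennreal (h (diameter (S i))))"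
      using h_nonneg \<open>M > 0\<close> by (intro suminf_le) (auto simp: ennreal_mult[symmetric] ennreal_leI)
    ultimately show ?thesis
      by (simp add: INF_lower2)
  qed
  have "(INF T\<in>gauge_covers (g ` A) \<delta>. ?sum T) \<le> (INF S\<in>gauge_covers A \<delta>'. ennreal M * ?sum S)"
    using image_cover by (rule INF_greatest)
  also have "\<dots> = ennreal M * (INF S\<in>gauge_covers A \<delta>'. ?sum S)"
    using \<open>M > 0\<close> by (simp add: INF_mult_left_ennreal)
  also have "\<dots> \<le> ennreal M * (SUP \<delta>\<in>{0<..}. INF S\<in>gauge_covers A \<delta>. ?sum S)"
    using \<open>\<delta>' > 0\<close> by (intro mult_left_mono SUP_upper) auto
  finally show "(INF T\<in>gauge_covers (g ` A) \<delta>. ?sum T)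
      \<le> ennreal M * (SUP \<delta>\<in>{0<..}. INF S\<in>gauge_covers A \<delta>. ?sum S)" .
qed

lemma hausdorff_gauge_le_co_Lipschitz_image:
  fixes f :: "complex \<Rightarrow> complex" and h :: "real \<Rightarrow> real"
  assumes co_lip: "\<And>x y. x \<in> A \<Longrightarrow> y \<in> A \<Longrightarrow> norm (x - y) \<le> K * norm (f x - f y)"
    and "K > 0" "M > 0" "d0 > 0" "h 0 = 0" "\<And>t. h t \<ge> 0"
    and "\<And>d. 0 < d \<Longrightarrow> d < d0 \<Longrightarrow> h (2 * K * d) \<le> M * h d"
  shows "hausdorff_gauge h A \<le> ennreal M * hausdorff_gauge h (f ` A)"
proof -
  have inj: "inj_on f A"
    using co_lip by (fastforce intro: inj_onI)
  have "norm (inv_into A f u - inv_into A f v) \<le> K * norm (u - v)" if "u \<in> f ` A" "v \<in> f ` A" for u v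
    using that co_lip inj by auto
  from hausdorff_gauge_Lipschitz_image_le[of "f ` A" "inv_into A f", OF this assms(2-)] show ?thesis
    using inj by simp
qed

section \<open>The repelling fixed point and the Schroeder equation\<close>

lemma exp_fixed_point_gt_one_unique:
  fixes lam a b :: real
  assumes "0 < lam" "lam * exp a = a" "1 < a" "lam * exp b = b" "1 < b"
  shows "a = b"
proof -
  have False if "lam * exp x = x" "1 < x" "lam * exp y = y" "x < y" for x y :: real
  proof -
    have "y = lam * exp x * exp (y - x)"
      using that(3) by (simp add: mult.assoc flip: exp_add)
    also have "\<dots> = x * exp (y - x)"
      using that(1) by simp
    finally have "y - x = x * (exp (y - x) - 1)"
      by (simp add: algebra_simps)
    also have "\<dots> > exp (y - x) - 1"
      using that by simp
    finally show False
      using exp_ge_add_one_self[of "y - x"] by linarith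
  qed
  from this[of a b] this[of b a] show ?thesis
    using assms by (cases a b rule: linorder_cases) auto
qed

lemma exp_fixed_point_gt_one_exists:
  fixes lam :: real
  assumes "0 < lam" "lam < exp (-1)"
  obtains x where "lam * exp x = x" "1 < x"
proof -
  define X where "X = 4 / lam + 1"
  have "lam * exp 1 < exp (-1) * exp 1"
    using assms by simp
  then have at_1: "lam * exp 1 - 1 < 0"
    by (simp flip: exp_add)
  have "1 \<le> X"
    using assms by (simp add: X_def)
  have "X\<^sup>2 / 4 \<le> (1 + X / 2)\<^sup>2"
    using \<open>1 \<le> X\<close> by (simp add: power2_eq_square field_simps)
  also have "\<dots> \<le> (exp (X / 2))\<^sup>2"
    using exp_ge_add_one_self[of "X / 2"] \<open>1 \<le> X\<close> by (intro power_mono) auto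
  also have "\<dots> = exp X"
    by (simp add: power2_eq_square flip: exp_add)
  finally have "lam * (X\<^sup>2 / 4) \<le> lam * exp X"
    using assms by simp
  moreover have "4 \<le> lam * X"
    using assms by (simp add: X_def field_simps)
  then have "X \<le> lam * (X\<^sup>2 / 4)"
    using \<open>1 \<le> X\<close> by (simp add: power2_eq_square)
  ultimately have at_X: "0 \<le> lam * exp X - X"
    by linarith
  have "continuous_on {1..X} (\<lambda>x. lam * exp x - x)"
    by (intro continuous_intros)
  then obtain x where "1 \<le> x" "lam * exp x - x = 0"
    using IVT'[of "\<lambda>x. lam * exp x - x" 1 0 X] at_1 at_X \<open>1 \<le> X\<close> by auto
  moreover have "x \<noteq> 1"
    using at_1 \<open>lam * exp x - x = 0\<close> by auto
  ultimately show ?thesis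
    using that by simp
qed

lemma beta_fp:
  assumes "0 < lam" "lam < exp (-1)"
  shows "lam * exp (beta_fp lam) = beta_fp lam" "1 < beta_fp lam"
proof -
  obtain b where b: "lam * exp b = b" "1 < b"
    using exp_fixed_point_gt_one_exists[OF assms] .
  have "beta_fp lam = b"
    unfolding beta_fp_def
  proof (rule the_equality)
    fix x assume x: "lam * exp x = x \<and> \<bar>lam * exp x\<bar> > 1"
    moreover have "0 < lam * exp x"
      using assms by simp
    ultimately show "x = b"
      using exp_fixed_point_gt_one_unique[OF \<open>0 < lam\<close> _ _ b] by auto
  qed (use b in simp)
  with b show "lam * exp (beta_fp lam) = beta_fp lam" "1 < beta_fp lam"
    by simp_all
qed

lemma tendsto_exp_minus_one_over:
  fixes u :: "'a \<Rightarrow> complex"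
  assumes "filterlim u (at 0) F"
  shows "((\<lambda>x. (exp (u x) - 1) / u x) \<longlongrightarrow> 1) F"
proof -
  have "((\<lambda>w. (exp w - 1) / w) \<longlongrightarrow> 1) (at (0::complex))"
    using DERIV_exp[of 0] by (simp add: has_field_derivative_iff)
  from filterlim_compose[OF this assms] show ?thesis .
qed

lemma Schroeder_zero_order:
  fixes D g F :: "complex \<Rightarrow> complex"
  assumes "0 < n" "0 < s" "c \<noteq> 0"
    and factor: "\<And>w. w \<in> ball 0 s \<Longrightarrow> D w = w ^ n * g w \<and> g w \<noteq> 0"
    and "isCont g 0" and "(F \<longlongrightarrow> c') (at 0)"
    and eq: "\<And>z. D (c * z) = F z * (exp (D z) - 1)"
  shows "c ^ n = c'"
proof -
  define u where "u z = z ^ n * g z" for z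
  have "(u \<longlongrightarrow> 0) (at 0)"
    using \<open>isCont g 0\<close> \<open>0 < n\<close> unfolding u_def isCont_def by (auto intro!: tendsto_eq_intros)
  moreover have "\<forall>\<^sub>F z in at 0. u z \<noteq> 0"
    unfolding eventually_at using \<open>0 < s\<close> factor by (auto simp: u_def intro!: exI[of _ s])
  ultimately have u: "filterlim u (at 0) (at 0)"
    by (rule filterlim_atI)
  have "\<forall>\<^sub>F z in at 0. F z * ((exp (u z) - 1) / u z) * g z = c ^ n * g (c * z)"
    unfolding eventually_at
  proof (intro exI[of _ "min s (s / norm c)"] conjI ballI impI)
    fix z :: complex assume z: "z \<noteq> 0 \<and> dist z 0 < min s (s / norm c)"
    then have "z \<in> ball 0 s" "c * z \<in> ball 0 s"
      using \<open>c \<noteq> 0\<close> by (auto simp: norm_mult field_simps)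
    then have "(c * z) ^ n * g (c * z) = F z * (exp (u z) - 1)" "g z \<noteq> 0"
      using eq[of z] factor by (auto simp: u_def)
    then have "F z * ((exp (u z) - 1) / u z) * g z = (c * z) ^ n * g (c * z) / z ^ n"
      by (simp add: u_def)
    then show "F z * ((exp (u z) - 1) / u z) * g z = c ^ n * g (c * z)"
      using z by (simp add: power_mult_distrib)
  qed (use \<open>0 < s\<close> \<open>c \<noteq> 0\<close> in simp)
  moreover have "((\<lambda>z. F z * ((exp (u z) - 1) / u z) * g z) \<longlongrightarrow> c' * 1 * g 0) (at 0)"
    using tendsto_exp_minus_one_over[OF u] assms(5,6) unfolding isCont_def by (intro tendsto_intros)
  ultimately have "((\<lambda>z. c ^ n * g (c * z)) \<longlongrightarrow> c' * g 0) (at 0)"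
    by (simp add: Lim_transform_eventually)
  moreover have "((\<lambda>z. c * z) \<longlongrightarrow> 0) (at (0::complex))"
    by (intro tendsto_mult_right_zero tendsto_ident_at)
  then have "((\<lambda>z. c ^ n * g (c * z)) \<longlongrightarrow> c ^ n * g 0) (at 0)"
    using \<open>isCont g 0\<close> by (intro tendsto_intros isCont_tendsto_compose[of 0 g])
  ultimately have "c' * g 0 = c ^ n * g 0"
    by (rule tendsto_unique[OF at_neq_bot])
  then show ?thesis
    using factor[of 0] \<open>0 < s\<close> by simp
qed

lemma Schroeder_equation_eq_0:
  fixes D F :: "complex \<Rightarrow> complex"
  assumes holo: "D holomorphic_on UNIV" and "D 0 = 0" and D': "(D has_field_derivative 0) (at 0)"
    and F: "(F \<longlongrightarrow> c) (at 0)" and "1 < norm c"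
    and eq: "\<And>z. D (c * z) = F z * (exp (D z) - 1)"
  shows "D z = 0"
proof (cases "D constant_on UNIV")
  case True
  then show ?thesis
    using \<open>D 0 = 0\<close> unfolding constant_on_def by auto
next
  case False
  obtain g s n where "0 < n" "0 < s" and g_holo: "g holomorphic_on ball 0 s"
    and "\<And>w. w \<in> ball 0 s \<Longrightarrow> D w = (w - 0) ^ n * g w" "\<And>w. w \<in> ball 0 s \<Longrightarrow> g w \<noteq> 0"
    by (rule holomorphic_factor_zero_nonconstant[OF holo open_UNIV connected_UNIV UNIV_I \<open>D 0 = 0\<close> False]) blast
  then have factor: "\<And>w. w \<in> ball 0 s \<Longrightarrow> D w = w ^ n * g w \<and> g w \<noteq> 0"
    by simp
  have "0 \<in> ball (0::complex) s"
    using \<open>0 < s\<close> by simp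
  then have g: "isCont g 0" "g field_differentiable at 0"
    using holomorphic_on_imp_continuous_on[OF g_holo] holomorphic_on_imp_differentiable_at[OF g_holo]
    by (simp_all add: continuous_on_eq_continuous_at)
  have "n \<noteq> 1"
  proof
    assume "n = 1"
    have "((\<lambda>w. w ^ 1 * g w) has_field_derivative g 0) (at 0)"
      using g(2) unfolding field_differentiable_def by (auto intro!: derivative_eq_intros)
    then have "((\<lambda>w. w ^ n * g w) has_field_derivative g 0) (at 0)"
      using \<open>n = 1\<close> by simp
    then have "(D has_field_derivative g 0) (at 0)"
      by (rule has_field_derivative_transform_within_open[of _ _ _ "ball 0 s"]) (use \<open>0 < s\<close> factor in auto)
    then show False
      using DERIV_unique[OF D'] factor[of 0] \<open>0 < s\<close> by auto
  qed
  have "c \<noteq> 0"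
    using \<open>1 < norm c\<close> by auto
  then have "c ^ n = c"
    using Schroeder_zero_order[OF \<open>0 < n\<close> \<open>0 < s\<close> _ _ g(1) F eq] factor by simp
  then have "norm c ^ n = norm c ^ 1"
    by (metis norm_power power_one_right)
  moreover have "norm c ^ 1 < norm c ^ n"
    using \<open>0 < n\<close> \<open>n \<noteq> 1\<close> \<open>1 < norm c\<close> by (intro power_strict_increasing) auto
  ultimately show ?thesis
    by simp
qed

section \<open>The linearizer of \<lambda> e^z\<close>

lemma exp_minus_id_mono:
  fixes lam a y :: real
  assumes "0 < lam" "1 \<le> lam * exp a" "a \<le> y"
  shows "lam * exp a - a \<le> lam * exp y - y"
proof -
  have "lam * exp a * (1 + (y - a)) \<le> lam * exp a * exp (y - a)"
    using assms exp_ge_add_one_self[of "y - a"] by (intro mult_left_mono) auto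
  moreover have "y - a \<le> lam * exp a * (y - a)"
    using assms by (simp add: mult_le_cancel_right1)
  then have "lam * exp a + (y - a) \<le> lam * exp a * (1 + (y - a))"
    by (simp add: distrib_left)
  ultimately show ?thesis
    by (simp add: mult.assoc flip: exp_add)
qed

locale exp_linearizer =
  fixes lam :: real
  assumes lam_pos: "0 < lam" and lam_less: "lam < exp (-1)"
begin

definition \<beta> :: real where "\<beta> = beta_fp lam"

abbreviation B :: complex where "B \<equiv> complex_of_real \<beta>"

abbreviation E :: "complex \<Rightarrow> complex" where "E \<equiv> E_map lam"

text \<open>Near \<beta> the map E is Lipschitz with constant \<beta> exp \<rho> = \<beta> powr (3/2); the two rescalings
  by 1/\<beta> in consecutive approximants turn this into the contraction factor q < 1.\<close>

definition \<rho> :: real where "\<rho> = ln \<beta> / 2"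

definition q :: real where "q = exp \<rho> / \<beta>"

definition r :: real where "r = min (\<rho> / 2) ((1 - q) / 4)"

lemma beta_fixed: "lam * exp \<beta> = \<beta>" and beta_gt_1: "1 < \<beta>"
  using beta_fp[OF lam_pos lam_less] by (simp_all add: \<beta>_def)

lemma rho_pos: "0 < \<rho>"
  using beta_gt_1 by (simp add: \<rho>_def)

lemma q_pos: "0 < q" and q_less_1: "q < 1"
proof -
  have "\<rho> < ln \<beta>"
    using beta_gt_1 by (simp add: \<rho>_def)
  then have "exp \<rho> < exp (ln \<beta>)"
    by (rule exp_less_mono)
  then show "q < 1"
    using beta_gt_1 by (simp add: q_def)
  show "0 < q"
    using beta_gt_1 by (simp add: q_def)
qed

lemma r_pos: "0 < r" and r_le_rho: "r \<le> \<rho> / 2" and r_le_q: "r \<le> (1 - q) / 4"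
  using rho_pos q_less_1 by (auto simp: r_def min_def)

lemma E_B: "E B = B"
  using beta_fixed by (simp add: E_map_def exp_of_real flip: of_real_mult)

lemma E_B_plus: "E (B + u) = B * exp u"
  using beta_fixed by (simp add: E_map_def exp_add exp_of_real flip: of_real_mult)

lemma E_Lipschitz_near_B:
  assumes "norm (x - B) \<le> \<rho>" "norm (y - B) \<le> \<rho>"
  shows "norm (E x - E y) \<le> \<beta> * exp \<rho> * norm (x - y)"
proof (rule field_differentiable_bound[of "cball B \<rho>" E E])
  show "(E has_field_derivative E z) (at z within cball B \<rho>)" for z
    unfolding E_map_def by (auto intro!: derivative_eq_intros)
  fix z assume "z \<in> cball B \<rho>"
  then have "Re z - \<beta> \<le> \<rho>"
    using complex_Re_le_cmod[of "z - B"] by (simp add: dist_norm norm_minus_commute)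
  then have "lam * exp (Re z) \<le> lam * exp (\<beta> + \<rho>)"
    using lam_pos by simp
  also have "\<dots> = \<beta> * exp \<rho>"
    using beta_fixed by (simp add: exp_add mult.assoc[symmetric])
  finally show "norm (E z) \<le> \<beta> * exp \<rho>"
    using lam_pos by (simp add: E_map_def norm_mult)
qed (use assms in \<open>auto simp: dist_norm norm_minus_commute\<close>)

primrec L_approx :: "nat \<Rightarrow> complex \<Rightarrow> complex" where
  "L_approx 0 z = B + z"
| "L_approx (Suc n) z = E (L_approx n (z / B))"

definition L_step :: "nat \<Rightarrow> complex \<Rightarrow> complex" where
  "L_step n z = L_approx (Suc n) z - L_approx n z"

lemma norm_divide_B: "norm (z / B) = norm z / \<beta>"
  using beta_gt_1 by (simp add: norm_divide)

lemma norm_divide_B_le: "norm (z / B) \<le> norm z"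
  using beta_gt_1 by (simp add: norm_divide_B divide_le_eq mult_le_cancel_left1)

lemma L_step_0_bound:
  assumes "norm z \<le> r"
  shows "norm (L_step 0 z) \<le> 2 * (norm z)\<^sup>2"
proof -
  define u where "u = z / B"
  have "norm u \<le> 1 / 2"
    using assms r_le_q q_pos norm_divide_B_le[of z] by (simp add: u_def)
  have "norm (exp u - 1 - u) \<le> exp (norm u) * (norm u)\<^sup>2"
    using Taylor_exp_field[of u 1] by (simp add: power2_eq_square diff_diff_eq)
  also have "\<dots> \<le> 2 * (norm u)\<^sup>2"
    using real_exp_bound_lemma[of "norm u"] \<open>norm u \<le> 1 / 2\<close> by (intro mult_right_mono) auto
  finally have "\<beta> * norm (exp u - 1 - u) \<le> 2 * (norm z)\<^sup>2 / \<beta>"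
    using beta_gt_1 by (simp add: u_def norm_divide_B power2_eq_square field_simps)
  also have "\<dots> \<le> 2 * (norm z)\<^sup>2"
    using beta_gt_1 by (simp add: divide_le_eq mult_le_cancel_left1)
  finally have "norm (B * (exp u - 1 - u)) \<le> 2 * (norm z)\<^sup>2"
    using beta_gt_1 by (simp add: norm_mult)
  moreover have "L_step 0 z = B * (exp u - 1 - u)"
    using beta_gt_1 by (simp add: L_step_def u_def E_B_plus algebra_simps)
  ultimately show ?thesis
    by simp
qed

lemma L_approx_eq_sum: "L_approx n z = B + z + (\<Sum>k<n. L_step k z)"
  unfolding L_step_def by (subst sum_lessThan_telescope) simp

text \<open>The induction step of L_step_bound: bounds on the earlier steps keep the approximant
  inside the disc where E_Lipschitz_near_B applies.\<close>

lemma L_approx_near_if_steps_bounded: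
  assumes steps: "\<And>k z. k < m \<Longrightarrow> norm z \<le> r \<Longrightarrow> norm (L_step k z) \<le> 2 * q ^ k * (norm z)\<^sup>2"
    and "norm z \<le> r"
  shows "norm (L_approx m z - B - z) \<le> 2 * (norm z)\<^sup>2 / (1 - q)" "norm (L_approx m z - B) \<le> \<rho>"
proof -
  have "norm (L_approx m z - B - z) \<le> (\<Sum>k<m. 2 * q ^ k * (norm z)\<^sup>2)"
    unfolding L_approx_eq_sum using \<open>norm z \<le> r\<close> by (auto intro!: sum_norm_le steps)
  also have "\<dots> = 2 * (norm z)\<^sup>2 * (\<Sum>k<m. q ^ k)"
    by (simp add: sum_distrib_left sum_distrib_right mult_ac)
  also have "\<dots> = 2 * (norm z)\<^sup>2 * ((1 - q ^ m) / (1 - q))"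
    using q_less_1 by (simp add: sum_gp_strict)
  also have "\<dots> \<le> 2 * (norm z)\<^sup>2 * (1 / (1 - q))"
    using q_pos q_less_1 by (intro mult_left_mono divide_right_mono) auto
  finally show close: "norm (L_approx m z - B - z) \<le> 2 * (norm z)\<^sup>2 / (1 - q)"
    by simp
  have "(norm z)\<^sup>2 \<le> r * ((1 - q) / 4)"
    unfolding power2_eq_square using \<open>norm z \<le> r\<close> r_le_q r_pos by (intro mult_mono) auto
  then have "2 * (norm z)\<^sup>2 / (1 - q) \<le> 2 * r * ((1 - q) / 4) / (1 - q)"
    using q_less_1 by (intro divide_right_mono) auto
  also have "\<dots> = r / 2"
    using q_less_1 by (simp add: field_simps)
  finally have "norm (L_approx m z - B - z) \<le> r / 2"
    using close by linarith
  then show "norm (L_approx m z - B) \<le> \<rho>"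
    using norm_triangle_ineq[of "L_approx m z - B - z" z] \<open>norm z \<le> r\<close> r_le_rho r_pos by simp
qed

lemma L_step_bound:
  "norm z \<le> r \<Longrightarrow> norm (L_step n z) \<le> 2 * q ^ n * (norm z)\<^sup>2"
proof (induction n arbitrary: z rule: less_induct)
  case (less n)
  show ?case
  proof (cases n)
    case 0
    then show ?thesis using L_step_0_bound[OF less.prems] by simp
  next
    case (Suc m)
    define w where "w = z / B"
    have "norm w \<le> r"
      using less.prems norm_divide_B_le[of z] by (simp add: w_def)
    have near: "norm (L_approx k w - B) \<le> \<rho>" if "k \<le> Suc m" for k
      using L_approx_near_if_steps_bounded(2)[OF less.IH \<open>norm w \<le> r\<close>] that Suc by simp
    have "norm (L_step n z) = norm (E (L_approx (Suc m) w) - E (L_approx m w))"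
      by (simp only: L_step_def Suc w_def L_approx.simps(2))
    also have "\<dots> \<le> \<beta> * exp \<rho> * norm (L_approx (Suc m) w - L_approx m w)"
      by (rule E_Lipschitz_near_B[OF near near]) simp_all
    also have "\<dots> = \<beta> * exp \<rho> * norm (L_step m w)"
      by (simp only: L_step_def)
    also have "\<dots> \<le> \<beta> * exp \<rho> * (2 * q ^ m * (norm w)\<^sup>2)"
      using less.IH[of m w] Suc \<open>norm w \<le> r\<close> beta_gt_1 by (intro mult_left_mono) auto
    also have "\<dots> = 2 * q ^ n * (norm z)\<^sup>2"
      using beta_gt_1 by (simp add: Suc w_def norm_divide_B q_def power2_eq_square field_simps)
    finally show ?thesis .
  qed
qed

lemma L_approx_near:
  assumes "norm z \<le> r"
  shows "norm (L_approx m z - B - z) \<le> 2 * (norm z)\<^sup>2 / (1 - q)"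
  using L_approx_near_if_steps_bounded(1)[OF L_step_bound assms] .

lemma uniform_limit_L_step_sums:
  "uniform_limit (cball 0 r) (\<lambda>n z. \<Sum>k<n. L_step k z) (\<lambda>z. \<Sum>k. L_step k z) sequentially"
proof (rule Weierstrass_m_test)
  fix n z assume "z \<in> cball (0::complex) r"
  then have "norm z \<le> r"
    by simp
  then have "norm (L_step n z) \<le> 2 * q ^ n * (norm z)\<^sup>2"
    by (rule L_step_bound)
  also have "\<dots> \<le> 2 * q ^ n * r\<^sup>2"
    using \<open>norm z \<le> r\<close> q_pos by (intro mult_left_mono power_mono) auto
  finally show "norm (L_step n z) \<le> 2 * r\<^sup>2 * q ^ n"
    by (simp add: mult_ac)
qed (use q_pos q_less_1 in \<open>intro summable_mult summable_geometric, simp\<close>)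

lemma L_approx_tendsto_series:
  "norm z \<le> r \<Longrightarrow> (\<lambda>n. L_approx n z) \<longlonglongrightarrow> B + z + (\<Sum>k. L_step k z)"
  unfolding L_approx_eq_sum
  by (intro tendsto_add tendsto_const tendsto_uniform_limitI[OF uniform_limit_L_step_sums]) simp

lemma E_holomorphic: "E holomorphic_on S"
  unfolding E_map_def by (intro holomorphic_intros)

lemma E_funpow_holomorphic: "(E ^^ m) holomorphic_on S"
proof (induction m arbitrary: S)
  case (Suc m)
  have "(E \<circ> (E ^^ m)) holomorphic_on S"
    by (intro holomorphic_on_compose_gen[OF Suc.IH E_holomorphic subset_UNIV])
  then show ?case
    by (simp add: o_def)
qed (simp add: holomorphic_intros)

lemma isCont_E_funpow: "isCont (E ^^ m) z"
  using holomorphic_on_imp_continuous_on[OF E_funpow_holomorphic[of m UNIV]]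
  by (simp add: continuous_on_eq_continuous_at)

lemma L_approx_add: "L_approx (n + m) z = (E ^^ m) (L_approx n (z / B ^ m))"
  by (induction m arbitrary: z) (simp_all add: field_simps)

lemma exists_norm_divide_B_power_less: "\<exists>m. norm z / \<beta> ^ m < r"
proof -
  obtain m where "norm z / r < \<beta> ^ m"
    using real_arch_pow[OF beta_gt_1] by blast
  then show ?thesis
    using r_pos beta_gt_1 by (auto simp: field_simps)
qed

lemma norm_divide_B_power: "norm (z / B ^ m) = norm z / \<beta> ^ m"
  using beta_gt_1 by (simp add: norm_divide norm_power)

lemma L_approx_convergent: "convergent (\<lambda>n. L_approx n z)"
proof -
  obtain m where "norm z / \<beta> ^ m < r"
    using exists_norm_divide_B_power_less by blast
  then have "(\<lambda>n. L_approx n (z / B ^ m)) \<longlonglongrightarrow> B + z / B ^ m + (\<Sum>k. L_step k (z / B ^ m))"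
    by (intro L_approx_tendsto_series) (simp add: norm_divide_B_power)
  then have "(\<lambda>n. L_approx (n + m) z) \<longlonglongrightarrow> (E ^^ m) (B + z / B ^ m + (\<Sum>k. L_step k (z / B ^ m)))"
    unfolding L_approx_add using isCont_E_funpow by (rule isCont_tendsto_compose[rotated])
  then have "(\<lambda>n. L_approx n z) \<longlonglongrightarrow> (E ^^ m) (B + z / B ^ m + (\<Sum>k. L_step k (z / B ^ m)))"
    by (rule LIMSEQ_offset)
  then show ?thesis
    by (auto simp: convergent_def)
qed

definition L :: "complex \<Rightarrow> complex" where
  "L z = lim (\<lambda>n. L_approx n z)"

lemma L_approx_tendsto: "(\<lambda>n. L_approx n z) \<longlonglongrightarrow> L z"
  unfolding L_def using L_approx_convergent by (simp add: convergent_LIMSEQ_iff)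

lemma L_eq_series: "norm z \<le> r \<Longrightarrow> L z = B + z + (\<Sum>k. L_step k z)"
  using L_approx_tendsto L_approx_tendsto_series LIMSEQ_unique by blast

lemma L_functional_equation: "E (L z) = L (B * z)"
proof -
  have "(\<lambda>n. E (L_approx n z)) \<longlonglongrightarrow> E (L z)"
    unfolding E_map_def by (intro tendsto_intros L_approx_tendsto)
  moreover have "(\<lambda>n. E (L_approx n z)) = (\<lambda>n. L_approx (Suc n) (B * z))"
    using beta_gt_1 by simp
  moreover have "(\<lambda>n. L_approx (Suc n) (B * z)) \<longlonglongrightarrow> L (B * z)"
    using L_approx_tendsto by (rule LIMSEQ_Suc)
  ultimately show ?thesis
    using LIMSEQ_unique by metis
qed

lemma L_eq_E_funpow: "L z = (E ^^ m) (L (z / B ^ m))"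
proof (induction m arbitrary: z)
  case (Suc m)
  have "L (z / B ^ m) = E (L (z / B ^ Suc m))"
    using L_functional_equation[of "z / B ^ Suc m"] beta_gt_1 by (simp add: field_simps)
  then show ?case
    using Suc.IH[of z] by (simp add: funpow_swap1)
qed simp

lemma L_approx_holomorphic: "L_approx n holomorphic_on S"
proof (induction n arbitrary: S)
  case (Suc n)
  have "(E \<circ> (L_approx n \<circ> (\<lambda>z. z / B))) holomorphic_on S"
    using beta_gt_1
    by (intro holomorphic_on_compose_gen[OF _ E_holomorphic subset_UNIV]
          holomorphic_on_compose_gen[OF _ Suc.IH subset_UNIV] holomorphic_intros) auto
  then show ?case
    by (simp add: o_def)
next
  case 0
  have "(\<lambda>z. B + z) holomorphic_on S"
    by (intro holomorphic_intros)
  moreover have "L_approx 0 = (\<lambda>z. B + z)"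
    by auto
  ultimately show ?case
    by simp
qed

lemma L_holomorphic_ball: "L holomorphic_on ball 0 r"
proof -
  have "(\<lambda>z. \<Sum>k. L_step k z) holomorphic_on ball 0 r"
  proof (rule holomorphic_uniform_limit[OF _ uniform_limit_L_step_sums])
    have partial_sums: "(\<lambda>z. \<Sum>k<n. L_step k z) holomorphic_on UNIV" for n
      unfolding L_step_def by (intro holomorphic_intros L_approx_holomorphic)
    show "\<forall>\<^sub>F n in sequentially. continuous_on (cball 0 r) (\<lambda>z. \<Sum>k<n. L_step k z) \<and>
        (\<lambda>z. \<Sum>k<n. L_step k z) holomorphic_on ball 0 r"
      by (intro always_eventually allI conjI holomorphic_on_imp_continuous_on
            holomorphic_on_subset[OF partial_sums subset_UNIV])
  qed auto
  then have "(\<lambda>z. B + z + (\<Sum>k. L_step k z)) holomorphic_on ball 0 r"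
    by (intro holomorphic_intros)
  then show ?thesis
    by (rule holomorphic_transform) (simp add: L_eq_series)
qed

lemma L_holomorphic: "L holomorphic_on S"
proof (rule holomorphic_on_balls_imp_entire'[of L 0])
  fix R :: real assume "0 < R"
  obtain m where m: "R / \<beta> ^ m < r"
    using exists_norm_divide_B_power_less[of "complex_of_real R"] \<open>0 < R\<close> by auto
  have "(\<lambda>z. z / B ^ m) ` ball 0 R \<subseteq> ball 0 r"
  proof safe
    fix z :: complex assume "z \<in> ball 0 R"
    then have "norm z / \<beta> ^ m < R / \<beta> ^ m"
      using beta_gt_1 by (simp add: divide_strict_right_mono)
    then show "z / B ^ m \<in> ball 0 r"
      using m by (simp add: norm_divide_B_power)
  qed
  then have "((E ^^ m) \<circ> (L \<circ> (\<lambda>z. z / B ^ m))) holomorphic_on ball 0 R"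
    using beta_gt_1
    by (intro holomorphic_on_compose_gen[OF _ E_funpow_holomorphic subset_UNIV]
          holomorphic_on_compose_gen[OF _ L_holomorphic_ball] holomorphic_intros) auto
  then show "L holomorphic_on ball 0 R"
    by (rule holomorphic_transform) (simp flip: L_eq_E_funpow)
qed

lemma L_0: "L 0 = B"
proof -
  have "L_approx n 0 = B" for n
    by (induction n) (simp_all add: E_B)
  then show ?thesis
    using L_approx_tendsto[of 0] by (simp add: LIMSEQ_const_iff)
qed

lemma L_near:
  assumes "norm z \<le> r"
  shows "norm (L z - B - z) \<le> 2 * (norm z)\<^sup>2 / (1 - q)"
proof (rule LIMSEQ_le_const2)
  show "(\<lambda>n. norm (L_approx n z - B - z)) \<longlonglongrightarrow> norm (L z - B - z)"
    by (intro tendsto_intros L_approx_tendsto)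
qed (use L_approx_near[OF assms] in auto)

lemma L_has_derivative_0: "(L has_field_derivative 1) (at 0)"
proof -
  have "((\<lambda>y. (L y - L 0) / (y - 0) - 1) \<longlongrightarrow> 0) (at 0)"
  proof (rule tendsto_0_le[where f = "\<lambda>y. y" and K = "2 / (1 - q)"])
    show "\<forall>\<^sub>F y in at 0. norm ((L y - L 0) / (y - 0) - 1) \<le> norm y * (2 / (1 - q))"
      unfolding eventually_at
    proof (intro exI[of _ r] conjI ballI impI r_pos)
      fix y :: complex assume "y \<noteq> 0 \<and> dist y 0 < r"
      then have "y \<noteq> 0" "norm y \<le> r"
        by auto
      then have "norm ((L y - L 0) / (y - 0) - 1) = norm (L y - B - y) / norm y"
        by (simp add: L_0 norm_divide field_simps)
      also have "\<dots> \<le> (2 * (norm y)\<^sup>2 / (1 - q)) / norm y"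
        using L_near[OF \<open>norm y \<le> r\<close>] by (intro divide_right_mono) auto
      also have "\<dots> = norm y * (2 / (1 - q))"
        using \<open>y \<noteq> 0\<close> by (simp add: power2_eq_square)
      finally show "norm ((L y - L 0) / (y - 0) - 1) \<le> norm y * (2 / (1 - q))" .
    qed
  qed (rule tendsto_ident_at)
  then show ?thesis
    by (simp add: has_field_derivative_iff Lim_null[symmetric])
qed

lemma isCont_L: "isCont L z"
  using holomorphic_on_imp_continuous_on[OF L_holomorphic[of UNIV]] by (simp add: continuous_on_eq_continuous_at)

lemma linearizer_unique:
  assumes holo: "M holomorphic_on UNIV" and "M 0 = B" and "(M has_field_derivative 1) (at 0)"
    and funct: "\<And>z. E (M z) = M (B * z)"
  shows "M = L"
proof -
  have "((\<lambda>z. M z - L z) has_field_derivative 0) (at 0)"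
    using assms(3) L_has_derivative_0 by (auto intro!: derivative_eq_intros)
  moreover have "((\<lambda>z. lam * exp (L z)) \<longlongrightarrow> B) (at 0)"
    using isCont_L[of 0] beta_fixed
    by (auto intro!: tendsto_eq_intros simp: isCont_def L_0 exp_of_real simp flip: of_real_mult)
  moreover have "M (B * z) - L (B * z) = lam * exp (L z) * (exp (M z - L z) - 1)" for z
  proof -
    have "M (B * z) - L (B * z) = E (M z) - E (L z)"
      by (simp add: funct L_functional_equation)
    also have "\<dots> = lam * exp (L z) * (exp (M z - L z) - 1)"
      by (simp add: E_map_def exp_diff field_simps)
    finally show ?thesis .
  qed
  moreover have "(\<lambda>z. M z - L z) holomorphic_on UNIV"
    using holo L_holomorphic by (intro holomorphic_intros)
  moreover have "M 0 - L 0 = 0" "1 < norm B"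
    using \<open>M 0 = B\<close> L_0 beta_gt_1 by simp_all
  ultimately have "M z - L z = 0" for z
    using Schroeder_equation_eq_0[where D = "\<lambda>z. M z - L z" and F = "\<lambda>z. lam * exp (L z)" and c = B]
    by blast
  then show ?thesis
    by auto
qed

lemma L_lin_eq_L: "L_lin lam = L"
  unfolding L_lin_def
proof (rule the_equality)
  show "L holomorphic_on UNIV \<and> L 0 = complex_of_real (beta_fp lam) \<and> deriv L 0 = 1 \<and>
      (\<forall>z. E_map lam (L z) = L (complex_of_real (beta_fp lam) * z))"
    using L_holomorphic L_0 DERIV_imp_deriv[OF L_has_derivative_0] L_functional_equation
    by (simp add: \<beta>_def)
next
  fix M assume M: "M holomorphic_on UNIV \<and> M 0 = complex_of_real (beta_fp lam) \<and> deriv M 0 = 1 \<and>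
      (\<forall>z. E_map lam (M z) = M (complex_of_real (beta_fp lam) * z))"
  then have "M field_differentiable at 0"
    using holomorphic_on_imp_differentiable_at[of M UNIV 0] by simp
  then have "(M has_field_derivative 1) (at 0)"
    using M by (simp flip: DERIV_deriv_iff_field_differentiable)
  then show "M = L"
    using M by (intro linearizer_unique) (simp_all add: \<beta>_def)
qed

lemma L_of_real_in_Reals: "L (complex_of_real x) \<in> \<real>"
proof -
  have "L_approx n (complex_of_real x) \<in> \<real>" for n
  proof (induction n arbitrary: x)
    case (Suc n)
    then obtain y where "L_approx n (complex_of_real (x / \<beta>)) = complex_of_real y"
      by (metis Reals_cases)
    then show ?case
      by (simp add: E_map_def exp_of_real flip: of_real_mult)
  qed simp
  then show ?thesis
    by (intro Lim_in_closed_set[OF closed_complex_Reals _ _ L_approx_tendsto]) auto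
qed

definition L_real :: "real \<Rightarrow> real" where
  "L_real x = Re (L (complex_of_real x))"

lemma L_of_real: "L (complex_of_real x) = complex_of_real (L_real x)"
  using L_of_real_in_Reals[of x] unfolding L_real_def by (metis Reals_cases Re_complex_of_real)

lemma L_real_0: "L_real 0 = \<beta>"
  by (simp add: L_real_def L_0)

lemma L_real_functional_equation: "L_real (\<beta> * x) = lam * exp (L_real x)"
proof -
  have "complex_of_real (L_real (\<beta> * x)) = E (L (complex_of_real x))"
    by (simp add: L_functional_equation flip: L_of_real)
  then show ?thesis
    by (simp add: L_of_real E_map_def exp_of_real flip: of_real_mult)
qed

lemma L_real_pos: "0 < L_real x"
  using L_real_functional_equation[of "x / \<beta>"] beta_gt_1 lam_pos by simp

definition L_real' :: "real \<Rightarrow> real" where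
  "L_real' x = Re (deriv L (complex_of_real x))"

lemma L_real_has_derivative: "(L_real has_real_derivative L_real' x) (at x)"
proof -
  have "(L has_field_derivative deriv L (complex_of_real x)) (at (complex_of_real x))"
    using L_holomorphic holomorphic_on_imp_differentiable_at[of L UNIV]
    by (simp add: DERIV_deriv_iff_field_differentiable)
  from has_field_derivative_Re[OF has_vector_derivative_real_field[OF this]]
  show ?thesis
    unfolding L_real_def[abs_def] L_real'_def by simp
qed

lemma isCont_L_real': "isCont L_real' x"
proof -
  have holo: "deriv L holomorphic_on UNIV"
    by (intro holomorphic_deriv L_holomorphic) simp
  then have "isCont (deriv L) (complex_of_real x)"
    using holomorphic_on_imp_continuous_on[OF holo] by (simp add: continuous_on_eq_continuous_at)
  then have "isCont (\<lambda>x. deriv L (complex_of_real x)) x"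
    using isCont_o2[where f = complex_of_real and a = x and g = "deriv L"] by (simp add: continuous_intros)
  then show ?thesis
    unfolding L_real'_def[abs_def] by (rule continuous_Re)
qed

lemma L_real'_0: "L_real' 0 = 1"
  using L_has_derivative_0 by (simp add: L_real'_def DERIV_imp_deriv)

lemma L_real'_functional_equation: "\<beta> * L_real' (\<beta> * x) = L_real (\<beta> * x) * L_real' x"
proof -
  have "((\<lambda>x. L_real (\<beta> * x)) has_real_derivative L_real' (\<beta> * x) * \<beta>) (at x)"
    using DERIV_chain2[OF L_real_has_derivative, of "\<lambda>x. \<beta> * x" \<beta> x]
    by (auto intro!: derivative_eq_intros)
  moreover have "((\<lambda>x. lam * exp (L_real x)) has_real_derivative lam * exp (L_real x) * L_real' x) (at x)"
    by (auto intro!: derivative_eq_intros L_real_has_derivative)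
  moreover have "(\<lambda>x. L_real (\<beta> * x)) = (\<lambda>x. lam * exp (L_real x))"
    by (simp add: L_real_functional_equation)
  ultimately have "L_real' (\<beta> * x) * \<beta> = lam * exp (L_real x) * L_real' x"
    by (metis DERIV_unique)
  then show ?thesis
    by (metis L_real_functional_equation mult.commute)
qed

lemma L_real'_nonzero: "L_real' x \<noteq> 0"
proof
  assume "L_real' x = 0"
  have "L_real' (x / \<beta> ^ n) = 0" for n
  proof (induction n)
    case (Suc n)
    have "\<beta> * (x / \<beta> ^ Suc n) = x / \<beta> ^ n"
      using beta_gt_1 by (simp add: field_simps)
    then have "L_real (x / \<beta> ^ n) * L_real' (x / \<beta> ^ Suc n) = 0"
      using L_real'_functional_equation[of "x / \<beta> ^ Suc n"] Suc.IH by simp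
    then show ?case
      using L_real_pos[of "x / \<beta> ^ n"] by simp
  qed (use \<open>L_real' x = 0\<close> in simp)
  moreover have "(\<lambda>n. x / \<beta> ^ n) \<longlonglongrightarrow> 0"
    using beta_gt_1 by (intro LIMSEQ_divide_realpow_zero) auto
  then have "(\<lambda>n. L_real' (x / \<beta> ^ n)) \<longlonglongrightarrow> L_real' 0"
    using isCont_L_real' by (rule isCont_tendsto_compose[rotated])
  ultimately have "L_real' 0 = 0"
    by (simp add: LIMSEQ_const_iff)
  then show False
    using L_real'_0 by simp
qed

lemma L_real'_pos: "0 < L_real' x"
proof (rule ccontr)
  assume "\<not> 0 < L_real' x"
  then have "L_real' x \<le> 0"
    by simp
  have "continuous_on S L_real'" for S
    using isCont_L_real' by (simp add: continuous_at_imp_continuous_on)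
  then have "\<exists>y. L_real' y = 0"
    using IVT'[of L_real' x 0 0] IVT2'[of L_real' x 0 0] L_real'_0 \<open>L_real' x \<le> 0\<close>
    by (cases "0 \<le> x") auto
  then show False
    using L_real'_nonzero by blast
qed

lemma strict_mono_L_real: "strict_mono L_real"
proof (rule strict_monoI)
  fix x y :: real assume "x < y"
  then show "L_real x < L_real y"
    by (rule DERIV_pos_imp_increasing) (use L_real_has_derivative L_real'_pos in blast)
qed

lemma L_real_unbounded: "\<exists>s. t \<le> L_real s"
proof -
  define d where "d = L_real \<beta> - L_real 1"
  have "0 < d"
    using strict_mono_L_real beta_gt_1 by (simp add: d_def strict_mono_less)
  have "1 < lam * exp (L_real 1)"
  proof -
    have "\<beta> < L_real 1"
      using strict_mono_L_real by (simp add: strict_mono_less flip: L_real_0)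
    then have "lam * exp \<beta> < lam * exp (L_real 1)"
      using lam_pos by simp
    then show ?thesis
      using beta_fixed beta_gt_1 by simp
  qed
  have step: "L_real x + d \<le> L_real (\<beta> * x)" if "1 \<le> x" for x
  proof -
    have "L_real 1 \<le> L_real x"
      using strict_mono_L_real that by (simp add: strict_mono_less_eq)
    then have "lam * exp (L_real 1) - L_real 1 \<le> lam * exp (L_real x) - L_real x"
      using \<open>1 < lam * exp (L_real 1)\<close> lam_pos by (intro exp_minus_id_mono) auto
    then show ?thesis
      using L_real_functional_equation[of 1] by (simp add: d_def L_real_functional_equation)
  qed
  have "L_real 1 + real n * d \<le> L_real (\<beta> ^ n)" for n
  proof (induction n)
    case (Suc n)
    have "1 \<le> \<beta> ^ n"
      using beta_gt_1 by simp
    then show ?case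
      using step[of "\<beta> ^ n"] Suc.IH by (simp add: algebra_simps)
  qed simp
  moreover obtain n where "(t - L_real 1) / d < real n"
    using reals_Archimedean2 by blast
  then have "t \<le> L_real 1 + real n * d"
    using \<open>0 < d\<close> by (simp add: field_simps)
  ultimately show ?thesis
    by (meson order_trans)
qed

lemma Phi_inv_eq:
  assumes "\<beta> < t"
  obtains s where "0 < s" "L_real s = t" "Phi_inv lam t = s"
proof -
  obtain S where "t \<le> L_real S"
    using L_real_unbounded by blast
  moreover have "continuous_on {0..S} L_real"
    using L_real_has_derivative DERIV_isCont by (blast intro: continuous_at_imp_continuous_on)
  moreover have "0 \<le> S"
  proof (rule ccontr)
    assume "\<not> 0 \<le> S"
    then have "L_real S < \<beta>"
      using strict_mono_L_real by (simp add: strict_mono_less flip: L_real_0)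
    then show False
      using \<open>t \<le> L_real S\<close> assms by simp
  qed
  ultimately obtain s where "0 \<le> s" "L_real s = t"
    using IVT'[of L_real 0 t S] assms L_real_0 by auto
  moreover have "s \<noteq> 0"
    using calculation assms L_real_0 by auto
  moreover have "Phi_inv lam t = s"
    unfolding Phi_inv_def L_lin_eq_L
  proof (rule the_equality)
    fix s' assume "L (complex_of_real s') = complex_of_real t"
    then have "L_real s' = L_real s"
      using \<open>L_real s = t\<close> by (simp add: L_of_real)
    then show "s' = s"
      using strict_mono_L_real by (simp add: strict_mono_eq)
  qed (simp add: L_of_real \<open>L_real s = t\<close>)
  ultimately show ?thesis
    using that by simp
qed

lemma Phi_inv_pos: "\<beta> < t \<Longrightarrow> 0 < Phi_inv lam t"
  using Phi_inv_eq by blast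

lemma Phi_inv_mono:
  assumes "\<beta> < t" "t \<le> t'"
  shows "Phi_inv lam t \<le> Phi_inv lam t'"
proof -
  obtain s where "L_real s = t" "Phi_inv lam t = s"
    using Phi_inv_eq[OF assms(1)] by blast
  moreover obtain s' where "L_real s' = t'" "Phi_inv lam t' = s'"
    using Phi_inv_eq[of t'] assms by force
  ultimately show ?thesis
    using assms strict_mono_less_eq[OF strict_mono_L_real, of s s'] by simp
qed

end

section \<open>Doubling of the gauge and the main theorem\<close>

lemma gauge_h_scale_le:
  assumes "0 < lam" "lam < exp (-1)" "0 < gam" "1 \<le> c"
  obtains d0 where "0 < d0" "\<And>d. 0 < d \<Longrightarrow> d < d0 \<Longrightarrow> gauge_h lam gam (c * d) \<le> c\<^sup>2 * gauge_h lam gam d"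
proof
  interpret exp_linearizer lam
    using assms by unfold_locales
  show "0 < 1 / (c * \<beta>)"
    using assms beta_gt_1 by simp
  fix d :: real assume "0 < d" "d < 1 / (c * \<beta>)"
  then have "\<beta> < 1 / (c * d)" "1 / (c * d) \<le> 1 / d"
    using assms beta_gt_1 by (simp_all add: field_simps)
  then have "Phi_inv lam (1 / (c * d)) powr gam \<le> Phi_inv lam (1 / d) powr gam"
    using Phi_inv_pos Phi_inv_mono assms by (intro powr_mono2) (auto intro: less_imp_le)
  then show "gauge_h lam gam (c * d) \<le> c\<^sup>2 * gauge_h lam gam d"
    using \<open>0 < d\<close> assms by (simp add: gauge_h_def power_mult_distrib)
qed

lemma bilipschitz_bounds:
  assumes "bilipschitz f"
  obtains K where "1 \<le> K" "\<And>x y. norm (f x - f y) \<le> K * norm (x - y)"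
    "\<And>x y. norm (x - y) \<le> K * norm (f x - f y)"
proof -
  obtain c C where "0 < c" "c < C" and ratio: "\<And>x y. x \<noteq> y \<Longrightarrow>
      c \<le> norm (f x - f y) / norm (x - y) \<and> norm (f x - f y) / norm (x - y) \<le> C"
    using assms unfolding bilipschitz_def by blast
  define K where "K = max 1 (max C (1 / c))"
  have "norm (f x - f y) \<le> K * norm (x - y) \<and> norm (x - y) \<le> K * norm (f x - f y)" for x y
  proof (cases "x = y")
    case False
    then have lo: "c * norm (x - y) \<le> norm (f x - f y)" and up: "norm (f x - f y) \<le> C * norm (x - y)"
      using ratio[OF False] by (simp_all add: field_simps)
    have "C \<le> K" "1 / c \<le> K"
      by (simp_all add: K_def)
    have "norm (x - y) \<le> 1 / c * norm (f x - f y)"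
      using lo \<open>0 < c\<close> by (simp add: field_simps)
    also have "\<dots> \<le> K * norm (f x - f y)"
      by (rule mult_right_mono[OF \<open>1 / c \<le> K\<close> norm_ge_zero])
    finally show ?thesis
      using up mult_right_mono[OF \<open>C \<le> K\<close> norm_ge_zero, of "x - y"] by linarith
  qed simp
  moreover have "1 \<le> K"
    by (simp add: K_def)
  ultimately show ?thesis
    using that by blast
qed

theorem mainTheorem4:
  fixes lam gam :: real and A :: "complex set" and f :: "complex \<Rightarrow> complex"
  assumes "0 < lam" "lam < exp (-1)" "0 < gam" "bilipschitz f"
  shows "(hausdorff_gauge (gauge_h lam gam) A = 0 \<longrightarrow> hausdorff_gauge (gauge_h lam gam) (f ` A) = 0)
       \<and> (hausdorff_gauge (gauge_h lam gam) A = \<infinity> \<longrightarrow> hausdorff_gauge (gauge_h lam gam) (f ` A) = \<infinity>)"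
proof -
  let ?H = "hausdorff_gauge (gauge_h lam gam)"
  obtain K where "1 \<le> K" and upper: "\<And>x y. norm (f x - f y) \<le> K * norm (x - y)"
    and lower: "\<And>x y. norm (x - y) \<le> K * norm (f x - f y)"
    using bilipschitz_bounds[OF assms(4)] by blast
  obtain d0 where "0 < d0" and doubling: "\<And>d. 0 < d \<Longrightarrow> d < d0 \<Longrightarrow>
      gauge_h lam gam (2 * K * d) \<le> (2 * K)\<^sup>2 * gauge_h lam gam d"
    using gauge_h_scale_le[OF assms(1-3), of "2 * K"] \<open>1 \<le> K\<close> by (auto simp: mult.assoc)
  have gauge: "gauge_h lam gam 0 = 0" "\<And>t. 0 \<le> gauge_h lam gam t"
    by (simp_all add: gauge_h_def)
  have "?H (f ` A) \<le> ennreal ((2 * K)\<^sup>2) * ?H A"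
    using \<open>1 \<le> K\<close> \<open>0 < d0\<close> gauge doubling
    by (intro hausdorff_gauge_Lipschitz_image_le[OF upper]) auto
  moreover have "?H A \<le> ennreal ((2 * K)\<^sup>2) * ?H (f ` A)"
    using \<open>1 \<le> K\<close> \<open>0 < d0\<close> gauge doubling
    by (intro hausdorff_gauge_le_co_Lipschitz_image[OF lower]) auto
  ultimately show ?thesis
    by (auto simp: ennreal_mult_eq_top_iff top_unique)
qed

end
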